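(* Let $n\ge 1$. The Zeckendorf game on $n$, starting from $\{F_1^n\}$, can be played to its end (the Zeckendorf decomposition of $n$) using only splitting moves and $C_1$ moves if and only if $n=F_k-1$ for some integer $k\ge 2$.
   Context: Fibonacci numbers are indexed by $F_1=1$, $F_2=2$, $F_{i+1}=F_i+F_{i-1}$. A game state is a finite multiset of Fibonacci numbers (tracked by index); $\{F_1^n\}$ denotes $n$ copies of $F_1$. The legal moves are: $C_1$: replace $F_1,F_1$ by $F_2$; for $i\ge 2$, $C_i$: replace $F_{i-1},F_i$ by $F_{i+1}$ (a "combining move"); $S_2$: replace $F_2,F_2$ by $F_1,F_3$; for $i\ge 3$, $S_i$: replace $F_i,F_i$ by $F_{i-2},F_{i+1}$ (a "splitting move"). The game on $n$ starts at $\{F_1^n\}$ and ends when no legal move is available, which happens exactly at the Zeckendorf decomposition of $n$ (the unique representation of $n$ as a sum of $F_i$'s with distinct, pairwise non-consecutive indices). *)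

theory Defs
  imports Main "HOL-Library.Multiset"
begin

text \<open>Fibonacci numbers with F 1 = 1, F 2 = 2, F (i+1) = F i + F (i-1).
  F 0 is never used (set to 0).\<close>
fun F :: "nat \<Rightarrow> nat" where
  "F 0 = 0"
| "F (Suc 0) = 1"
| "F (Suc (Suc 0)) = 2"
| "F (Suc (Suc (Suc i))) = F (Suc (Suc i)) + F (Suc i)"

text \<open>Game states: multisets of Fibonacci indices (index i stands for F i).\<close>
type_synonym state = "nat multiset"

definition combine :: "nat \<Rightarrow> state \<Rightarrow> state \<Rightarrow> bool" where
  "combine i M M' \<longleftrightarrow>
     (if i = 1 then {#1, 1#} \<subseteq># M \<and> M' = M - {#1, 1#} + {#2#}
      else 2 \<le> i \<and> {#i - 1, i#} \<subseteq># M \<and> M' = M - {#i - 1, i#} + {#i + 1#})"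

definition split_move :: "nat \<Rightarrow> state \<Rightarrow> state \<Rightarrow> bool" where
  "split_move i M M' \<longleftrightarrow>
     (if i = 2 then {#2, 2#} \<subseteq># M \<and> M' = M - {#2, 2#} + {#1, 3#}
      else 3 \<le> i \<and> {#i, i#} \<subseteq># M \<and> M' = M - {#i, i#} + {#i - 2, i + 1#})"

definition legal_move :: "state \<Rightarrow> state \<Rightarrow> bool" where
  "legal_move M M' \<longleftrightarrow> (\<exists>i. combine i M M') \<or> (\<exists>i. split_move i M M')"

definition split_C1_move :: "state \<Rightarrow> state \<Rightarrow> bool" where
  "split_C1_move M M' \<longleftrightarrow> combine 1 M M' \<or> (\<exists>i. split_move i M M')"

definition game_over :: "state \<Rightarrow> bool" where
  "game_over M \<longleftrightarrow> \<not> (\<exists>M'. legal_move M M')"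

end

theory Submission
  imports Defs
begin

text \<open>If only splitting moves and C_1 are used, then for every index j up to the largest part,
  the parts below j are worth at least F (j - 1) - 1: this holds for the initial ones, and S_i
  leaves F (i - 2) behind when it creates F (i + 1). A terminal state is the Zeckendorf
  decomposition of n; if its largest part is F m, the other parts are worth at most F (m - 1) - 1
  by Zeckendorf's bound and at least that by the invariant, so n = F (m + 1) - 1.
  Conversely, F (j + 1) - 1 ones can be played to {F j, F (j - 2), ...}, because adding F j
  further ones to this state reaches the corresponding state for F (j + 2) - 1 (strong induction
  on j, splitting the F j ones as F (j - 2) + F (j - 1)).\<close>

lemma F_Suc: "2 \<le> i \<Longrightarrow> F (Suc i) = F i + F (i - 1)"
  by (cases i rule: F.cases) auto

lemma F_rec: "3 \<le> i \<Longrightarrow> F i = F (i - 1) + F (i - 2)"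
  by (cases i rule: F.cases) auto

lemma F_mono: "i \<le> j \<Longrightarrow> F i \<le> F j"
proof (induction j rule: dec_induct)
  case (step j)
  have "F j \<le> F (Suc j)" by (induction j rule: F.induct) auto
  with step show ?case by linarith
qed simp

lemma F_pred_le_1: "j \<le> 2 \<Longrightarrow> F (j - 1) \<le> 1"
  by (cases j rule: F.cases) auto

definition fib_sum :: "nat multiset \<Rightarrow> nat" where
  "fib_sum M = (\<Sum>x\<in>#M. F x)"

lemma fib_sum_simps [simp]:
  "fib_sum {#} = 0"
  "fib_sum (add_mset a M) = F a + fib_sum M"
  "fib_sum (M + N) = fib_sum M + fib_sum N"
  by (simp_all add: fib_sum_def)

lemma fib_sum_filter_mono: "j \<le> j' \<Longrightarrow> fib_sum {#x \<in># M. x < j#} \<le> fib_sum {#x \<in># M. x < j'#}"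
  by (induction M) auto

lemma split_C1_move_C1: "split_C1_move (N + {#1, 1#}) (N + {#2#})"
  by (simp add: split_C1_move_def combine_def)

lemma split_C1_move_S2: "split_C1_move (N + {#2, 2#}) (N + {#1, 3#})"
  unfolding split_C1_move_def split_move_def by (intro disjI2 exI[of _ 2]) simp

lemma split_C1_move_S: "3 \<le> i \<Longrightarrow> split_C1_move (N + {#i, i#}) (N + {#i - 2, i + 1#})"
  unfolding split_C1_move_def split_move_def by (intro disjI2 exI[of _ i]) simp

lemma split_C1_moveE:
  assumes "split_C1_move M M'"
  obtains (C1) N where "M = N + {#1, 1#}" "M' = N + {#2#}"
    | (S2) N where "M = N + {#2, 2#}" "M' = N + {#1, 3#}"
    | (S) N i where "3 \<le> i" "M = N + {#i, i#}" "M' = N + {#i - 2, i + 1#}"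
proof -
  have decomp: "\<exists>N. M = N + A" if "A \<subseteq># M" for A
    using that by (metis add.commute mset_subset_eq_exists_conv)
  from assms consider "combine 1 M M'" | i where "split_move i M M'"
    unfolding split_C1_move_def by blast
  then show thesis
  proof cases
    case 1
    then show thesis using C1 decomp unfolding combine_def by fastforce
  next
    case (2 i)
    show thesis
    proof (cases "i = 2")
      case True
      then show thesis using 2 S2 decomp unfolding split_move_def by fastforce
    next
      case False
      then show thesis using 2 S decomp unfolding split_move_def by fastforce
    qed
  qed
qed

lemma split_C1_move_add_right: "split_C1_move M M' \<Longrightarrow> split_C1_move (M + K) (M' + K)"
  by (erule split_C1_moveE)
    (metis add.assoc add.commute split_C1_move_C1 split_C1_move_S2 split_C1_move_S)+

lemma rtranclp_split_C1_move_add_right: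
  "split_C1_move\<^sup>*\<^sup>* M M' \<Longrightarrow> split_C1_move\<^sup>*\<^sup>* (M + K) (M' + K)"
  by (induction rule: rtranclp_induct) (auto intro: rtranclp.rtrancl_into_rtrancl split_C1_move_add_right)

lemma split_C1_move_fib_sum: "split_C1_move M M' \<Longrightarrow> fib_sum M' = fib_sum M"
proof (induction rule: split_C1_moveE)
  case (S N i)
  with F_Suc[of i] F_rec[of i] show ?case by simp
qed (simp_all add: eval_nat_numeral)

text \<open>\<open>F (j - 1) \<le> \<dots> + 1\<close> avoids truncated subtraction; for \<open>j \<le> 2\<close> the condition is void.\<close>

definition split_C1_invariant :: "nat multiset \<Rightarrow> bool" where
  "split_C1_invariant M \<longleftrightarrow>
     0 \<notin># M \<and> (\<forall>i\<in>#M. \<forall>j\<le>i. F (j - 1) \<le> fib_sum {#x \<in># M. x < j#} + 1)"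

lemma split_C1_invariant_replicate: "split_C1_invariant (replicate_mset n 1)"
  by (auto simp: split_C1_invariant_def F_pred_le_1)

lemma split_C1_move_invariant:
  assumes "split_C1_move M M'" and inv: "split_C1_invariant M"
  shows "split_C1_invariant M'"
  using assms(1)
proof (cases rule: split_C1_moveE)
  case (C1 N)
  show ?thesis unfolding split_C1_invariant_def
  proof (intro conjI ballI allI impI)
    show "0 \<notin># M'" using inv C1 by (simp add: split_C1_invariant_def)
    fix k j assume "k \<in># M'" "j \<le> k"
    show "F (j - 1) \<le> fib_sum {#x \<in># M'. x < j#} + 1"
    proof (cases "j \<le> 2")
      case False
      with \<open>k \<in># M'\<close> \<open>j \<le> k\<close> C1 have "k \<in># M" by auto
      with inv \<open>j \<le> k\<close> have "F (j - 1) \<le> fib_sum {#x \<in># M. x < j#} + 1"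
        by (simp add: split_C1_invariant_def)
      with False C1 show ?thesis by (simp add: eval_nat_numeral)
    qed (use F_pred_le_1[of j] in simp)
  qed
next
  case (S2 N)
  show ?thesis unfolding split_C1_invariant_def
  proof (intro conjI ballI allI impI)
    show "0 \<notin># M'" using inv S2 by (simp add: split_C1_invariant_def)
    fix k j assume "k \<in># M'" "j \<le> k"
    consider "j \<le> 2" | "j = 3" | "3 < j" by linarith
    then show "F (j - 1) \<le> fib_sum {#x \<in># M'. x < j#} + 1"
    proof cases
      case 1
      with F_pred_le_1[of j] show ?thesis by simp
    next
      case 2
      with S2 show ?thesis by (simp add: eval_nat_numeral)
    next
      case 3
      with \<open>k \<in># M'\<close> \<open>j \<le> k\<close> S2 have "k \<in># M" by auto
      with inv \<open>j \<le> k\<close> have "F (j - 1) \<le> fib_sum {#x \<in># M. x < j#} + 1"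
        by (simp add: split_C1_invariant_def)
      with 3 S2 show ?thesis by (simp add: eval_nat_numeral)
    qed
  qed
next
  case (S N i)
  show ?thesis unfolding split_C1_invariant_def
  proof (intro conjI ballI allI impI)
    show "0 \<notin># M'" using inv S by (auto simp: split_C1_invariant_def)
    have below_i: "F (j - 1) \<le> fib_sum {#x \<in># N. x < j#} + (if i < j then 2 * F i else 0) + 1"
      if "j \<le> i" for j
      using inv that S by (auto simp: split_C1_invariant_def)
    fix k j assume "k \<in># M'" "j \<le> k"
    consider "j \<le> i" | "j = i + 1" | "i + 1 < j" by linarith
    then show "F (j - 1) \<le> fib_sum {#x \<in># M'. x < j#} + 1"
    proof cases
      case 1
      with below_i[of j] S show ?thesis by auto
    next
      case 2
      have "fib_sum {#x \<in># N. x < i#} \<le> fib_sum {#x \<in># N. x < i + 1#}"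
        by (rule fib_sum_filter_mono) simp
      with below_i[of i] 2 S F_rec[of i] show ?thesis by auto
    next
      case 3
      with \<open>k \<in># M'\<close> \<open>j \<le> k\<close> S have "k \<in># M" by auto
      with inv \<open>j \<le> k\<close> have "F (j - 1) \<le> fib_sum {#x \<in># M. x < j#} + 1"
        by (simp add: split_C1_invariant_def)
      with 3 S F_Suc[of i] F_rec[of i] show ?thesis by auto
    qed
  qed
qed

lemma reachable_from_ones:
  assumes "split_C1_move\<^sup>*\<^sup>* (replicate_mset n 1) M"
  shows "split_C1_invariant M" and "fib_sum M = n"
  using assms
proof (induction rule: rtranclp_induct)
  case base
  show "split_C1_invariant (replicate_mset n 1)" by (rule split_C1_invariant_replicate)
  show "fib_sum (replicate_mset n 1) = n" by (induction n) auto
qed (auto intro: split_C1_move_invariant dest: split_C1_move_fib_sum)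

definition zeckendorf :: "nat multiset \<Rightarrow> bool" where
  "zeckendorf M \<longleftrightarrow> (\<forall>x. count M x \<le> 1) \<and> (\<forall>i\<in>#M. Suc i \<notin># M)"

lemma zeckendorf_add_mset:
  "zeckendorf (add_mset a M) \<longleftrightarrow> zeckendorf M \<and> a \<notin># M \<and> Suc a \<notin># M \<and> (\<forall>i\<in>#M. Suc i \<noteq> a)"
  by (auto simp: zeckendorf_def not_in_iff[symmetric] split: if_splits) (metis le0 not_in_iff)

lemma subset_pair_mset_iff:
  "{#a, b#} \<subseteq># M \<longleftrightarrow> (if a = b then 2 \<le> count M a else a \<in># M \<and> b \<in># M)"
  by (auto simp: insert_subset_eq_iff in_diff_count intro: count_inI)

lemma game_over_iff_zeckendorf:
  assumes "0 \<notin># M"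
  shows "game_over M \<longleftrightarrow> zeckendorf M"
proof
  assume over: "game_over M"
  have no_move: False if "legal_move M M'" for M'
    using over that by (auto simp: game_over_def)
  have "count M x \<le> 1" for x
  proof (rule ccontr)
    assume "\<not> count M x \<le> 1"
    then have twice: "2 \<le> count M x" by simp
    with assms have "x \<noteq> 0" by (auto intro: count_inI)
    then consider "x = 1" | "x = 2" | "3 \<le> x" by linarith
    then show False
    proof cases
      case 1
      with twice have "combine 1 M (M - {#1, 1#} + {#2#})"
        by (simp add: combine_def subset_pair_mset_iff)
      then show False using no_move legal_move_def by blast
    next
      case 2
      with twice have "split_move 2 M (M - {#2, 2#} + {#1, 3#})"
        by (simp add: split_move_def subset_pair_mset_iff)
      then show False using no_move legal_move_def by blast
    next
      case 3
      with twice have "split_move x M (M - {#x, x#} + {#x - 2, x + 1#})"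
        by (simp add: split_move_def subset_pair_mset_iff)
      then show False using no_move legal_move_def by blast
    qed
  qed
  moreover have "Suc i \<notin># M" if "i \<in># M" for i
  proof
    assume "Suc i \<in># M"
    with that assms have "combine (Suc i) M (M - {#i, Suc i#} + {#Suc i + 1#})"
      by (cases i) (auto simp: combine_def subset_pair_mset_iff)
    then show False using no_move legal_move_def by blast
  qed
  ultimately show "zeckendorf M" by (simp add: zeckendorf_def)
next
  assume "zeckendorf M"
  then have once: "count M x \<le> 1" and gap: "x \<in># M \<Longrightarrow> Suc x \<notin># M" for x
    by (auto simp: zeckendorf_def)
  have "\<not> combine i M M'" for i M'
    using once[of 1] gap[of "i - 1"] by (auto simp: combine_def subset_pair_mset_iff)
  moreover have "\<not> split_move i M M'" for i M'
    using once[of i] by (auto simp: split_move_def subset_pair_mset_iff)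
  ultimately show "game_over M" by (simp add: game_over_def legal_move_def)
qed

lemma fib_sum_lt_F_Suc:
  assumes "zeckendorf M" "0 \<notin># M" "\<forall>x\<in>#M. x \<le> m"
  shows "fib_sum M < F (Suc m)"
  using assms
proof (induction m arbitrary: M rule: less_induct)
  case (less m)
  show ?case
  proof (cases "m \<in># M")
    case True
    then obtain M1 where M: "M = add_mset m M1" by (blast dest: multi_member_split)
    with less.prems have m: "1 \<le> m" and M1: "zeckendorf M1" "0 \<notin># M1"
      and gaps: "\<forall>x\<in>#M1. x \<le> m \<and> x \<noteq> m \<and> Suc x \<noteq> m"
      by (auto simp: zeckendorf_add_mset Suc_le_eq)
    from gaps have "\<forall>x\<in>#M1. x \<le> m - 2" by fastforce
    with less.IH[of "m - 2" M1] m M1 have "fib_sum M1 < F (Suc (m - 2))" by simp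
    moreover have "F m + F (Suc (m - 2)) \<le> F (Suc m)"
      using \<open>1 \<le> m\<close> F_Suc[of m] by (cases "m = 1") (simp_all add: numeral_2_eq_2 Suc_diff_Suc)
    ultimately show ?thesis using M by simp
  next
    case False
    show ?thesis
    proof (cases "m = 0")
      case True
      with less.prems have "M = {#}" by (metis le_zero_eq multiset_nonemptyE)
      with True show ?thesis by simp
    next
      case False
      with \<open>m \<notin># M\<close> less.prems have "\<forall>x\<in>#M. x \<le> m - 1" by (auto simp: le_eq_less_or_eq)
      with False less.prems less.IH[of "m - 1" M] have "fib_sum M < F m" by simp
      with F_mono[of m "Suc m"] show ?thesis by simp
    qed
  qed
qed

lemma fib_sum_eq_F_Suc_Max:
  assumes inv: "split_C1_invariant M" and zeck: "zeckendorf M" and "M \<noteq> {#}"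
  shows "fib_sum M + 1 = F (Suc (Max_mset M))"
proof -
  define m where "m = Max_mset M"
  have "m \<in># M" and le_m: "\<forall>x\<in>#M. x \<le> m" using \<open>M \<noteq> {#}\<close> by (simp_all add: m_def)
  then obtain M1 where M: "M = add_mset m M1" by (blast dest: multi_member_split)
  have pos: "0 \<notin># M" using inv by (simp add: split_C1_invariant_def)
  with \<open>m \<in># M\<close> have "1 \<le> m" by (cases m) auto
  from zeck le_m M have "\<forall>x\<in>#M1. x < m"
    by (auto simp: zeckendorf_add_mset order.order_iff_strict)
  then have "{#x \<in># M. x < m#} = M1" by (simp add: M filter_mset_eq_conv)
  moreover have "F (m - 1) \<le> fib_sum {#x \<in># M. x < m#} + 1"
    using inv \<open>m \<in># M\<close> by (simp add: split_C1_invariant_def)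
  ultimately have lower: "F (m - 1) \<le> fib_sum M1 + 1" by simp
  have sum: "fib_sum M = F m + fib_sum M1" by (simp add: M)
  have upper: "fib_sum M < F (Suc m)" using fib_sum_lt_F_Suc zeck pos le_m by blast
  have "fib_sum M + 1 = F (Suc m)"
  proof (cases "m = 1")
    case True
    with upper sum show ?thesis by simp
  next
    case False
    with \<open>1 \<le> m\<close> F_Suc[of m] lower upper sum show ?thesis by simp
  qed
  then show ?thesis by (simp add: m_def)
qed

text \<open>\<open>{#j, j - 2, j - 4, \<dots>#}\<close> (positive indices only), the Zeckendorf decomposition of
  \<open>F (j + 1) - 1\<close>.\<close>

fun alternating_indices :: "nat \<Rightarrow> nat multiset" where
  "alternating_indices 0 = {#}"
| "alternating_indices (Suc 0) = {#1#}"
| "alternating_indices (Suc (Suc j)) = add_mset (Suc (Suc j)) (alternating_indices j)"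

lemma in_alternating_indices: "x \<in># alternating_indices j \<Longrightarrow> 1 \<le> x \<and> x \<le> j"
  by (induction j rule: alternating_indices.induct) auto

lemma zeckendorf_alternating_indices: "zeckendorf (alternating_indices j)"
proof (induction j rule: alternating_indices.induct)
  case (3 j)
  then show ?case by (auto simp: zeckendorf_add_mset dest: in_alternating_indices)
qed (simp_all add: zeckendorf_def)

lemma game_over_alternating_indices: "game_over (alternating_indices j)"
proof -
  have "0 \<notin># alternating_indices j" using in_alternating_indices by fastforce
  with zeckendorf_alternating_indices show ?thesis by (simp add: game_over_iff_zeckendorf)
qed

lemma alternating_indices_add_top:
  "1 \<le> j \<Longrightarrow> split_C1_move\<^sup>*\<^sup>* (add_mset j (alternating_indices j)) (alternating_indices (Suc j))"
proof (induction j rule: alternating_indices.induct)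
  case 2
  show ?case using split_C1_move_C1[of "{#}"] by (simp add: eval_nat_numeral)
next
  case (3 t)
  show ?case
  proof (cases "t = 0")
    case True
    with split_C1_move_S2[of "{#}"] show ?thesis by (simp add: eval_nat_numeral add_mset_commute)
  next
    case False
    let ?A = alternating_indices and ?top = "Suc (Suc t)"
    have "split_C1_move (?A t + {#?top, ?top#}) (add_mset t (?A t) + {#?top + 1#})"
      using split_C1_move_S[of ?top "?A t"] False by (simp add: add_mset_commute)
    moreover have "split_C1_move\<^sup>*\<^sup>* (add_mset t (?A t) + {#?top + 1#}) (?A (Suc t) + {#?top + 1#})"
      using 3 False by (intro rtranclp_split_C1_move_add_right) simp
    ultimately have "split_C1_move\<^sup>*\<^sup>* (?A t + {#?top, ?top#}) (?A (Suc t) + {#?top + 1#})"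
      by (rule converse_rtranclp_into_rtranclp)
    then show ?thesis by (simp add: add_mset_commute)
  qed
qed simp

lemma replicate_mset_add: "replicate_mset (a + b) x = replicate_mset a x + replicate_mset b x"
  by (induction a) auto

lemma alternating_indices_add_ones:
  "1 \<le> j \<Longrightarrow>
    split_C1_move\<^sup>*\<^sup>* (alternating_indices j + replicate_mset (F j) 1) (alternating_indices (Suc j))"
proof (induction j rule: less_induct)
  case (less j)
  let ?A = alternating_indices and ?ones = "\<lambda>k. replicate_mset k (1::nat)"
  consider "j = 1" | "j = 2" | t where "j = Suc (Suc t)" "1 \<le> t"
    using less.prems by (metis One_nat_def Suc_le_D le_SucE le_antisym not_less_eq_eq numeral_2_eq_2)
  then show ?case
  proof cases
    case 1
    with split_C1_move_C1[of "{#}"] show ?thesis by (simp add: eval_nat_numeral)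
  next
    case 2
    have "split_C1_move ({#2#} + {#1, 1#}) ({#2#} + {#2#})" by (rule split_C1_move_C1)
    moreover have "split_C1_move ({#} + {#2, 2#}) ({#} + {#1, 3#})" by (rule split_C1_move_S2)
    ultimately have "split_C1_move\<^sup>*\<^sup>* ({#2#} + {#1, 1#}) ({#1, 3#})" by auto
    with 2 show ?thesis by (simp add: eval_nat_numeral add_mset_commute)
  next
    case 3
    have split_ones: "?A j + ?ones (F j) = (?A t + ?ones (F t)) + add_mset j (?ones (F (Suc t)))"
      using 3 F_Suc[of "Suc t"] by (simp add: replicate_mset_add ac_simps)
    have "split_C1_move\<^sup>*\<^sup>* (?A j + ?ones (F j)) (?A (Suc t) + add_mset j (?ones (F (Suc t))))"
      unfolding split_ones using less.IH[of t] 3 by (intro rtranclp_split_C1_move_add_right) simp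
    also have "split_C1_move\<^sup>*\<^sup>* \<dots> (add_mset j (?A j))"
      using rtranclp_split_C1_move_add_right[OF less.IH[of "Suc t"], of "{#j#}"] 3 by simp
    also have "split_C1_move\<^sup>*\<^sup>* \<dots> (?A (Suc j))"
      using 3 by (intro alternating_indices_add_top) simp
    finally show ?thesis .
  qed
qed

lemma ones_to_alternating_indices:
  "1 \<le> j \<Longrightarrow> split_C1_move\<^sup>*\<^sup>* (replicate_mset (F (Suc j) - 1) 1) (alternating_indices j)"
proof (induction j rule: dec_induct)
  case (step j)
  have "F (Suc (Suc j)) - 1 = (F (Suc j) - 1) + F j"
    using F_Suc[of "Suc j"] F_mono[of 1 "Suc j"] step(1) by simp
  then have "split_C1_move\<^sup>*\<^sup>* (replicate_mset (F (Suc (Suc j)) - 1) 1)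
      (alternating_indices j + replicate_mset (F j) 1)"
    using step(3) by (simp add: replicate_mset_add rtranclp_split_C1_move_add_right)
  also have "split_C1_move\<^sup>*\<^sup>* \<dots> (alternating_indices (Suc j))"
    using alternating_indices_add_ones step(1) by simp
  finally show ?case .
qed simp

theorem theorem1p3:
  fixes n :: nat
  assumes "n \<ge> 1"
  shows "(\<exists>M. split_C1_move\<^sup>*\<^sup>* (replicate_mset n 1) M \<and> game_over M)
         \<longleftrightarrow> (\<exists>k::nat. k \<ge> 2 \<and> n = F k - 1)"
proof
  assume "\<exists>M. split_C1_move\<^sup>*\<^sup>* (replicate_mset n 1) M \<and> game_over M"
  then obtain M where reach: "split_C1_move\<^sup>*\<^sup>* (replicate_mset n 1) M" and "game_over M" by blast
  from reach have inv: "split_C1_invariant M" and sum: "fib_sum M = n" by (rule reachable_from_ones)+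
  with \<open>game_over M\<close> have "zeckendorf M" by (simp add: game_over_iff_zeckendorf split_C1_invariant_def)
  moreover have "M \<noteq> {#}" using sum assms by auto
  ultimately have max: "n + 1 = F (Suc (Max_mset M))" using fib_sum_eq_F_Suc_Max inv sum by metis
  moreover have "Max_mset M \<noteq> 0"
  proof
    assume "Max_mset M = 0"
    with max assms show False by simp
  qed
  ultimately show "\<exists>k. k \<ge> 2 \<and> n = F k - 1"
    by (intro exI[of _ "Suc (Max_mset M)"]) simp
next
  assume "\<exists>k. k \<ge> 2 \<and> n = F k - 1"
  then obtain k where "2 \<le> k" "n = F k - 1" by blast
  moreover obtain j where "k = Suc j" using \<open>2 \<le> k\<close> by (cases k) auto
  ultimately have "1 \<le> j" "n = F (Suc j) - 1" by simp_all
  then show "\<exists>M. split_C1_move\<^sup>*\<^sup>* (replicate_mset n 1) M \<and> game_over M"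
    using ones_to_alternating_indices game_over_alternating_indices by blast
qed

end
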